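(* Let $n>0$ be an integer of length $l$. Then $$\lim_{k\to\infty}\ \sum_{\substack{m:\ \mathrm{ld}_l(m)=n\\ k(m)=k}}\frac1m=b\log\!\left(1+\frac1n\right),$$ where the sum is over all positive integers $m$ whose base-$b$ representation starts with that of $n$ and contains exactly $k$ occurrences of $d$.
   Context: Fix $b\ge2$ and $d\in\{0,\dots,b-1\}$. For an integer $n\ge0$, its length $l(n)$ is the smallest $l\ge0$ with $n<b^l$, and $k(n)$ is the number of occurrences of $d$ in its base-$b$ representation without leading zeros. For $m>0$ of length $q\ge l$, $\mathrm{ld}_l(m)=\lfloor m/b^{q-l}\rfloor$ (only $m$ of length $\ge l$ are considered). *)

theory Defs
  imports "HOL-Analysis.Analysis"
begin

definition blen :: "nat \<Rightarrow> nat \<Rightarrow> nat" where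
  "blen b n = (LEAST l. n < b ^ l)"

text \<open>Number of occurrences of digit d in the base-b representation of n
  (without leading zeros; n = 0 has the empty representation).\<close>
fun digcount :: "nat \<Rightarrow> nat \<Rightarrow> nat \<Rightarrow> nat" where
  "digcount b d n =
     (if n = 0 \<or> b < 2 then 0
      else (if n mod b = d then 1 else 0) + digcount b d (n div b))"

text \<open>Leading l digits of m (meaningful for m of length at least l).\<close>
definition ld :: "nat \<Rightarrow> nat \<Rightarrow> nat \<Rightarrow> nat" where
  "ld b l m = m div b ^ (blen b m - l)"

end

theory Submission
  imports Defs
begin

text \<open>
  Write \<open>m = n b\<^sup>J + u\<close> with \<open>u < b\<^sup>J\<close>. Then \<open>m\<close> starts with \<open>n\<close> and has \<open>k(n) + K\<close> digits
  \<open>d\<close> iff the \<open>J\<close>-digit block \<open>u\<close>, read with leading zeros, has \<open>K\<close> of them. There are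
  \<open>C(J,K) (b-1)\<^sup>J\<^sup>-\<^sup>K\<close> such blocks and \<open>\<Sum>\<^sub>J C(J,K) (b-1)\<^sup>J\<^sup>-\<^sup>K / b\<^sup>J = b\<close>, so the sum of \<open>1/m\<close> over
  the numbers made of a prefix \<open>p\<close> followed by a block with \<open>K\<close> digits \<open>d\<close> lies between \<open>b/(p+1)\<close>
  and \<open>b/p\<close>. Such a block has at least \<open>K\<close> digits; splitting off its first \<open>K\<close> digits \<open>s\<close>
  writes the sum for the prefix \<open>n\<close> as the sum over \<open>s < b\<^sup>K\<close> of the sums for the prefixes
  \<open>n b\<^sup>K + s\<close>. It therefore lies between \<open>b \<Sum>\<^sub>s 1/(n b\<^sup>K + s + 1)\<close> and \<open>b \<Sum>\<^sub>s 1/(n b\<^sup>K + s)\<close>,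
  lower and upper Riemann sums of \<open>b \<integral> dx/x = b log (1 + 1/n)\<close> over \<open>[n b\<^sup>K, (n+1) b\<^sup>K]\<close> that
  differ by at most \<open>b\<^sup>1\<^sup>-\<^sup>K\<close>.
\<close>

declare digcount.simps[simp del]

text \<open>Occurrences of \<open>d\<close> among the last \<open>J\<close> digits of \<open>u\<close>, padded with leading zeros.\<close>
fun low_digcount :: "nat \<Rightarrow> nat \<Rightarrow> nat \<Rightarrow> nat \<Rightarrow> nat" where
  "low_digcount b d 0 u = 0"
| "low_digcount b d (Suc J) u = (if u mod b = d then 1 else 0) + low_digcount b d J (u div b)"

lemma low_digcount_le: "low_digcount b d J u \<le> J"
  by (induction J arbitrary: u) (auto simp: le_SucI)

lemma low_digcount_add:
  "low_digcount b d (J + t) u = low_digcount b d J (u mod b ^ J) + low_digcount b d t (u div b ^ J)"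
proof (induction J arbitrary: u)
  case 0
  then show ?case by simp
next
  case (Suc J)
  have low_digit: "(u mod b ^ Suc J) mod b = u mod b"
    by (simp add: mod_mod_cancel)
  have low_rest: "(u mod b ^ Suc J) div b = (u div b) mod b ^ J"
  proof (cases "b = 0")
    case False
    have "u mod (b * b ^ J) = b * (u div b mod b ^ J) + u mod b" by (rule mod_mult2_eq)
    then show ?thesis using False by simp
  qed simp
  have high: "(u div b) div b ^ J = u div b ^ Suc J"
    by (simp add: div_mult2_eq)
  have "low_digcount b d (Suc J + t) u
      = (if u mod b = d then 1 else 0) + low_digcount b d J ((u div b) mod b ^ J)
        + low_digcount b d t (u div b ^ Suc J)"
    by (simp only: add_Suc low_digcount.simps Suc.IH high add.assoc)
  also have "\<dots> = low_digcount b d (Suc J) (u mod b ^ Suc J) + low_digcount b d t (u div b ^ Suc J)"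
    by (simp only: low_digcount.simps low_digit low_rest)
  finally show ?case .
qed

lemma div_power_append:
  fixes b J u p :: nat
  assumes "u < b ^ J"
  shows "(p * b ^ J + u) div b ^ J = p"
proof -
  have "b ^ J > 0" using assms by linarith
  then have "(u + p * b ^ J) div b ^ J = u div b ^ J + p" by simp
  then show ?thesis using assms by (simp add: add.commute)
qed

definition tails :: "nat \<Rightarrow> nat \<Rightarrow> nat \<Rightarrow> nat \<Rightarrow> nat set" where
  "tails b d J K = {u. u < b ^ J \<and> low_digcount b d J u = K}"

lemma finite_tails [simp]: "finite (tails b d J K)"
  by (simp add: tails_def)

lemma of_nat_card_tails:
  "real (card (tails b d J K)) = (\<Sum>u<b ^ J. if low_digcount b d J u = K then 1 else 0)"
proof -
  have "tails b d J K = {u \<in> {..<b ^ J}. low_digcount b d J u = K}"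
    by (auto simp: tails_def)
  then have "real (card (tails b d J K)) = (\<Sum>u\<in>{u \<in> {..<b ^ J}. low_digcount b d J u = K}. 1)"
    by (simp only: real_of_card)
  also have "\<dots> = (\<Sum>u<b ^ J. if low_digcount b d J u = K then 1 else 0)"
    by (rule sum.inter_filter) simp
  finally show ?thesis .
qed

lemma sum_lessThan_mult_split:
  fixes f :: "nat \<Rightarrow> 'a::comm_monoid_add"
  shows "(\<Sum>u<m * b. f u) = (\<Sum>v<m. \<Sum>a<b. f (v * b + a))"
proof -
  have "(\<Sum>u<m * b. f u) = (\<Sum>v<m. \<Sum>u\<in>{v * b..<v * b + b}. f u)"
    by (rule sum.nat_group[symmetric])
  also have "\<dots> = (\<Sum>v<m. \<Sum>a<b. f (v * b + a))"
    by (simp add: sum.atLeastLessThan_shift_0[of _ "v * b" for v] lessThan_atLeast0 comp_def)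
  finally show ?thesis .
qed

lemma sum_digit_indicator:
  assumes "d < b"
  shows "(\<Sum>a<b. if (if a = d then 1 else 0) + c = (K::nat) then 1 else 0 :: real)
       = real (b - 1) * (if c = K then 1 else 0) + (if c + 1 = K then 1 else 0)"
proof -
  have "(\<Sum>a<b. if (if a = d then 1 else 0) + c = K then 1 else 0 :: real)
     = (if 1 + c = K then 1 else 0)
       + (\<Sum>a\<in>{..<b}-{d}. if (if a = d then 1 else 0) + c = K then 1 else 0)"
    using assms by (subst sum.remove[of _ d]) auto
  also have "(\<Sum>a\<in>{..<b}-{d}. if (if a = d then 1 else 0) + c = K then 1 else 0 :: real)
       = real (b - 1) * (if c = K then 1 else 0)"
    using assms by (subst sum.cong[OF refl, of _ _ "\<lambda>_. if c = K then 1 else 0"]) auto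
  finally show ?thesis by simp
qed

lemma card_tails_Suc:
  assumes "d < b"
  shows "real (card (tails b d (Suc J) K))
       = real (b - 1) * real (card (tails b d J K))
         + (if K = 0 then 0 else real (card (tails b d J (K - 1))))"
proof -
  have "real (card (tails b d (Suc J) K))
      = (\<Sum>v<b ^ J. \<Sum>a<b. if low_digcount b d (Suc J) (v * b + a) = K then 1 else 0)"
    unfolding of_nat_card_tails power_Suc2 by (rule sum_lessThan_mult_split)
  also have "\<dots> = (\<Sum>v<b ^ J. \<Sum>a<b.
                    if (if a = d then 1 else 0) + low_digcount b d J v = K then 1 else 0)"
    using assms by (intro sum.cong refl) auto
  also have "\<dots> = (\<Sum>v<b ^ J. real (b - 1) * (if low_digcount b d J v = K then 1 else 0)
                     + (if low_digcount b d J v + 1 = K then 1 else 0))"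
    using assms by (simp add: sum_digit_indicator)
  also have "\<dots> = real (b - 1) * real (card (tails b d J K))
                  + (\<Sum>v<b ^ J. if low_digcount b d J v + 1 = K then 1 else 0)"
    unfolding of_nat_card_tails by (simp add: sum.distrib sum_distrib_left)
  also have "(\<Sum>v<b ^ J. if low_digcount b d J v + 1 = K then 1 else 0 :: real)
           = (if K = 0 then 0 else real (card (tails b d J (K - 1))))"
    unfolding of_nat_card_tails by (cases K) simp_all
  finally show ?thesis .
qed

definition tail_mass :: "nat \<Rightarrow> nat \<Rightarrow> nat \<Rightarrow> nat \<Rightarrow> real" where
  "tail_mass b d K M = (\<Sum>J<M. real (card (tails b d J K)) / real b ^ J)"

lemma incseq_tail_mass: "incseq (tail_mass b d K)"
  unfolding tail_mass_def by (intro incseq_SucI) simp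

definition extensions :: "nat \<Rightarrow> nat \<Rightarrow> nat \<Rightarrow> nat \<Rightarrow> nat set" where
  "extensions b d p K = {p * b ^ J + u | J u. u \<in> tails b d J K}"

lemma extensions_eq_image:
  "extensions b d p K = (\<lambda>(J, u). p * b ^ J + u) ` (SIGMA J:UNIV. tails b d J K)"
  by (auto simp: extensions_def)

context
  fixes b :: nat
  assumes b_ge_2: "2 \<le> b"
begin

lemma less_power_blen: "m < b ^ blen b m"
proof -
  have "m < 2 ^ m" by (rule less_exp)
  also have "(2::nat) ^ m \<le> b ^ m" using b_ge_2 by (intro power_mono) auto
  finally show ?thesis unfolding blen_def by (rule LeastI)
qed

lemma power_le_if_less_blen: "l < blen b m \<Longrightarrow> b ^ l \<le> m"
  unfolding blen_def using not_less_Least by (metis not_le)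

lemma blen_eqI:
  assumes "m < b ^ l" "\<And>l'. l' < l \<Longrightarrow> b ^ l' \<le> m"
  shows "blen b m = l"
  unfolding blen_def
  by (rule Least_equality) (use assms in \<open>auto simp: not_less[symmetric]\<close>)

lemma blen_append:
  assumes q: "q > 0" and u: "u < b ^ J"
  shows "blen b (q * b ^ J + u) = blen b q + J"
proof -
  let ?l = "blen b q"
  have q_less: "q < b ^ ?l" by (rule less_power_blen)
  with q have "?l \<ge> 1" by (cases ?l) auto
  then have q_ge: "b ^ (?l - 1) \<le> q" by (intro power_le_if_less_blen) simp
  show ?thesis
  proof (rule blen_eqI)
    have "q * b ^ J + u < (q + 1) * b ^ J" using u by simp
    also have "\<dots> \<le> b ^ ?l * b ^ J" using q_less by (intro mult_right_mono) auto
    finally show "q * b ^ J + u < b ^ (?l + J)" by (simp add: power_add)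
  next
    fix l' assume "l' < ?l + J"
    then have "b ^ l' \<le> b ^ (?l - 1) * b ^ J"
      using b_ge_2 by (simp add: power_add[symmetric] power_increasing)
    also have "\<dots> \<le> q * b ^ J" using q_ge by simp
    finally show "b ^ l' \<le> q * b ^ J + u" by simp
  qed
qed

lemma digcount_append:
  assumes q: "q > 0"
  shows "u < b ^ J \<Longrightarrow> digcount b d (q * b ^ J + u) = digcount b d q + low_digcount b d J u"
proof (induction J arbitrary: u)
  case 0
  then show ?case by simp
next
  case (Suc J)
  let ?m = "q * b ^ Suc J + u"
  have step: "digcount b d m = (if m mod b = d then 1 else 0) + digcount b d (m div b)"
    if "m > 0" for m
    using that b_ge_2 digcount.simps[of b d m] by simp
  have "digcount b d ?m = (if ?m mod b = d then 1 else 0) + digcount b d (?m div b)"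
    using q b_ge_2 by (intro step) simp
  moreover have "?m mod b = u mod b"
    by (simp add: mod_add_left_eq[symmetric])
  moreover have "?m div b = q * b ^ J + u div b"
    using b_ge_2 by (simp add: div_add1_eq mult.assoc)
  moreover have "u div b < b ^ J"
    using Suc.prems b_ge_2 by (simp add: div_less_iff_less_mult mult.commute)
  ultimately show ?case using Suc.IH by simp
qed

lemma inj_on_append:
  assumes "p > 0"
  shows "inj_on (\<lambda>(J, u). p * b ^ J + u) {(J, u). u < b ^ J}"
proof (rule inj_onI, clarsimp)
  fix J u J' u'
  assume u: "u < b ^ J" and u': "u' < b ^ J'" and eq: "p * b ^ J + u = p * b ^ J' + u'"
  have "J = J'"
    using arg_cong[OF eq, of "blen b"] blen_append[OF assms u] blen_append[OF assms u']
    by simp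
  with eq show "J = J' \<and> u = u'" by simp
qed

lemma sum_recip_tails_bounds:
  assumes p: "p > 0"
  shows "real (card (tails b d J K)) / ((real p + 1) * real b ^ J)
           \<le> (\<Sum>u\<in>tails b d J K. 1 / real (p * b ^ J + u))"
    and "(\<Sum>u\<in>tails b d J K. 1 / real (p * b ^ J + u))
           \<le> real (card (tails b d J K)) / (real p * real b ^ J)"
proof -
  have lower: "real p * real b ^ J \<le> real (p * b ^ J + u)" for u
    by simp
  have upper: "real (p * b ^ J + u) \<le> (real p + 1) * real b ^ J" if "u \<in> tails b d J K" for u
  proof -
    have "p * b ^ J + u \<le> (p + 1) * b ^ J" using that by (simp add: tails_def)
    then have "real (p * b ^ J + u) \<le> real ((p + 1) * b ^ J)" by (simp only: of_nat_le_iff)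
    then show ?thesis by (simp add: algebra_simps)
  qed
  have pos: "real p * real b ^ J > 0" using p b_ge_2 by simp
  have "(\<Sum>u\<in>tails b d J K. 1 / ((real p + 1) * real b ^ J))
      \<le> (\<Sum>u\<in>tails b d J K. 1 / real (p * b ^ J + u))"
  proof (rule sum_mono)
    fix u assume "u \<in> tails b d J K"
    moreover have "0 < real (p * b ^ J + u)" using pos lower[of u] by linarith
    ultimately show "1 / ((real p + 1) * real b ^ J) \<le> 1 / real (p * b ^ J + u)"
      using upper b_ge_2 by (intro divide_left_mono mult_pos_pos) auto
  qed
  then show "real (card (tails b d J K)) / ((real p + 1) * real b ^ J)
               \<le> (\<Sum>u\<in>tails b d J K. 1 / real (p * b ^ J + u))"
    by simp
  have "(\<Sum>u\<in>tails b d J K. 1 / real (p * b ^ J + u))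
      \<le> (\<Sum>u\<in>tails b d J K. 1 / (real p * real b ^ J))"
    using lower pos by (intro sum_mono divide_left_mono) auto
  then show "(\<Sum>u\<in>tails b d J K. 1 / real (p * b ^ J + u))
               \<le> real (card (tails b d J K)) / (real p * real b ^ J)"
    by simp
qed

lemma sum_recip_tails_tail_mass:
  assumes p: "p > 0"
  defines "f \<equiv> \<lambda>(J, u). 1 / real (p * b ^ J + u)"
  shows "tail_mass b d K M / (real p + 1) \<le> sum f (SIGMA J:{..<M}. tails b d J K)"
    and "sum f (SIGMA J:{..<M}. tails b d J K) \<le> tail_mass b d K M / real p"
proof -
  have Sigma: "sum f (SIGMA J:{..<M}. tails b d J K)
             = (\<Sum>J<M. \<Sum>u\<in>tails b d J K. 1 / real (p * b ^ J + u))"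
    unfolding f_def by (subst sum.Sigma) auto
  show "tail_mass b d K M / (real p + 1) \<le> sum f (SIGMA J:{..<M}. tails b d J K)"
    unfolding Sigma tail_mass_def sum_divide_distrib
    using sum_recip_tails_bounds(1)[OF p] by (intro sum_mono) (simp add: ac_simps)
  show "sum f (SIGMA J:{..<M}. tails b d J K) \<le> tail_mass b d K M / real p"
    unfolding Sigma tail_mass_def sum_divide_distrib
    using sum_recip_tails_bounds(2)[OF p] by (intro sum_mono) (simp add: ac_simps)
qed

lemma extensions_split:
  assumes p: "p > 0" and t: "t \<le> K"
  shows "extensions b d p K
       = (\<Union>s<b ^ t. extensions b d (p * b ^ t + s) (K - low_digcount b d t s))"
proof (intro equalityI subsetI)
  fix m assume "m \<in> extensions b d p K"
  then obtain J u where u: "u < b ^ J" and count: "low_digcount b d J u = K"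
    and m: "m = p * b ^ J + u"
    by (auto simp: extensions_def tails_def)
  have "t \<le> J" using low_digcount_le[of b d J u] t count by linarith
  then obtain J' where J: "J = J' + t" by (metis add.commute le_add_diff_inverse)
  define s where "s = u div b ^ J'"
  define u' where "u' = u mod b ^ J'"
  have "b ^ J' > 0" using b_ge_2 by simp
  then have s: "s < b ^ t" and u': "u' < b ^ J'"
    using u J by (simp_all add: s_def u'_def div_less_iff_less_mult power_add mult.commute)
  have "low_digcount b d J' u' = K - low_digcount b d t s"
    using count low_digcount_add[of b d J' t u] unfolding J s_def u'_def by simp
  moreover have "m = (p * b ^ t + s) * b ^ J' + u'"
  proof -
    have "u = s * b ^ J' + u'" unfolding s_def u'_def by (rule div_mult_mod_eq[symmetric])
    then show ?thesis unfolding m J by (simp add: power_add algebra_simps)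
  qed
  ultimately show "m \<in> (\<Union>s<b ^ t. extensions b d (p * b ^ t + s) (K - low_digcount b d t s))"
    using s u' by (auto simp: extensions_def tails_def)
next
  fix m assume "m \<in> (\<Union>s<b ^ t. extensions b d (p * b ^ t + s) (K - low_digcount b d t s))"
  then obtain s J' u' where s: "s < b ^ t" and u': "u' < b ^ J'"
    and count: "low_digcount b d J' u' = K - low_digcount b d t s"
    and m: "m = (p * b ^ t + s) * b ^ J' + u'"
    by (auto simp: extensions_def tails_def)
  define u where "u = s * b ^ J' + u'"
  have "u < (s + 1) * b ^ J'" using u' by (simp add: u_def)
  also have "\<dots> \<le> b ^ t * b ^ J'" using s by (intro mult_right_mono) auto
  also have "\<dots> = b ^ (J' + t)" by (simp add: power_add)
  finally have u: "u < b ^ (J' + t)" .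
  have "low_digcount b d (J' + t) u = low_digcount b d J' u' + low_digcount b d t s"
    using low_digcount_add[of b d J' t u] div_power_append[OF u', of s] u' by (simp add: u_def)
  also have "\<dots> = K" using count low_digcount_le[of b d t s] t by simp
  finally have "low_digcount b d (J' + t) u = K" .
  moreover have "m = p * b ^ (J' + t) + u"
    unfolding m u_def by (simp add: power_add algebra_simps)
  ultimately show "m \<in> extensions b d p K" using u by (auto simp: extensions_def tails_def)
qed

lemma extensions_disjoint:
  assumes p: "p > 0" "p' > 0" and same_blen: "blen b p = blen b p'" and "p \<noteq> p'"
  shows "extensions b d p K \<inter> extensions b d p' K' = {}"
proof (rule equals0I)
  fix m assume "m \<in> extensions b d p K \<inter> extensions b d p' K'"
  then obtain J u J' u' where u: "u < b ^ J" and u': "u' < b ^ J'"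
    and m: "m = p * b ^ J + u" and m': "m = p' * b ^ J' + u'"
    by (auto simp: extensions_def tails_def)
  have "blen b p + J = blen b p' + J'"
    using blen_append[OF p(1) u] blen_append[OF p(2) u'] m m' by simp
  then have "J = J'" using same_blen by simp
  then have "p = p'"
    using div_power_append[OF u, of p] div_power_append[OF u', of p'] m m' by simp
  with \<open>p \<noteq> p'\<close> show False ..
qed

lemma starts_with_iff_append:
  assumes n: "n > 0"
  shows "m > 0 \<and> blen b n \<le> blen b m \<and> ld b (blen b n) m = n
           \<longleftrightarrow> (\<exists>J u. u < b ^ J \<and> m = n * b ^ J + u)"
proof
  assume "m > 0 \<and> blen b n \<le> blen b m \<and> ld b (blen b n) m = n"
  then have "m div b ^ (blen b m - blen b n) = n" by (simp add: ld_def)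
  then have "m = n * b ^ (blen b m - blen b n) + m mod b ^ (blen b m - blen b n)"
    by (metis div_mult_mod_eq)
  moreover have "m mod b ^ (blen b m - blen b n) < b ^ (blen b m - blen b n)"
    using b_ge_2 by simp
  ultimately show "\<exists>J u. u < b ^ J \<and> m = n * b ^ J + u" by blast
next
  assume "\<exists>J u. u < b ^ J \<and> m = n * b ^ J + u"
  then obtain J u where u: "u < b ^ J" and m: "m = n * b ^ J + u" by blast
  have "blen b m = blen b n + J" unfolding m by (rule blen_append[OF n u])
  then show "m > 0 \<and> blen b n \<le> blen b m \<and> ld b (blen b n) m = n"
    using n b_ge_2 div_power_append[OF u] by (simp add: m ld_def)
qed

lemma starts_with_digcount_eq_extensions:
  assumes n: "n > 0"
  shows "{m. m > 0 \<and> blen b m \<ge> blen b n \<and> ld b (blen b n) m = n \<and> digcount b d m = k}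
       = (if digcount b d n \<le> k then extensions b d n (k - digcount b d n) else {})"
proof (intro set_eqI iffI)
  fix m
  assume "m \<in> {m. m > 0 \<and> blen b m \<ge> blen b n \<and> ld b (blen b n) m = n \<and> digcount b d m = k}"
  then obtain J u where u: "u < b ^ J" and m: "m = n * b ^ J + u" and "digcount b d m = k"
    using starts_with_iff_append[OF n] by blast
  then have k: "k = digcount b d n + low_digcount b d J u" using digcount_append[OF n u] by simp
  have "m \<in> extensions b d n (k - digcount b d n)"
    unfolding extensions_def tails_def k using u m by auto
  then show "m \<in> (if digcount b d n \<le> k then extensions b d n (k - digcount b d n) else {})"
    using k by simp
next
  fix m
  assume "m \<in> (if digcount b d n \<le> k then extensions b d n (k - digcount b d n) else {})"
  then obtain J u where u: "u < b ^ J" and m: "m = n * b ^ J + u"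
    and "digcount b d n + low_digcount b d J u = k"
    by (auto simp: extensions_def tails_def split: if_splits)
  then have "digcount b d m = k" using digcount_append[OF n u] by simp
  then show "m \<in> {m. m > 0 \<and> blen b m \<ge> blen b n \<and> ld b (blen b n) m = n \<and> digcount b d m = k}"
    using starts_with_iff_append[OF n] u m by blast
qed

end

lemma ln_add_one_diff_bounds:
  fixes x :: real
  assumes "x > 0"
  shows "1 / (x + 1) \<le> ln (x + 1) - ln x" and "ln (x + 1) - ln x \<le> 1 / x"
proof -
  have "ln (x + 1) - ln x = ln ((x + 1) / x)"
    using assms by (simp add: ln_div)
  also have "\<dots> = ln (1 + 1 / x)"
    using assms by (simp add: field_simps)
  also have "\<dots> \<le> 1 / x" using assms by (intro ln_add_one_self_le_self) auto
  finally show "ln (x + 1) - ln x \<le> 1 / x" .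
  have "ln x - ln (x + 1) = ln (x / (x + 1))"
    using assms by (simp add: ln_div)
  also have "\<dots> \<le> x / (x + 1) - 1" using assms by (intro ln_le_minus_one) auto
  also have "\<dots> = - (1 / (x + 1))" using assms by (simp add: field_simps)
  finally show "1 / (x + 1) \<le> ln (x + 1) - ln x" by linarith
qed

lemma harmonic_block_ln_bounds:
  assumes "N > (0::nat)"
  shows "(\<Sum>s<L. 1 / (real (N + s) + 1)) \<le> ln (real (N + L)) - ln (real N)"
    and "ln (real (N + L)) - ln (real N) \<le> (\<Sum>s<L. 1 / real (N + s))"
proof -
  have "ln (real (N + L)) - ln (real N) = (\<Sum>s<L. ln (real (N + Suc s)) - ln (real (N + s)))"
    by (subst sum_lessThan_telescope) simp
  also have "\<dots> = (\<Sum>s<L. ln (real (N + s) + 1) - ln (real (N + s)))"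
    by (simp add: add.commute)
  finally have telescope:
    "ln (real (N + L)) - ln (real N) = (\<Sum>s<L. ln (real (N + s) + 1) - ln (real (N + s)))" .
  show "(\<Sum>s<L. 1 / (real (N + s) + 1)) \<le> ln (real (N + L)) - ln (real N)"
    unfolding telescope using assms by (intro sum_mono ln_add_one_diff_bounds(1)) auto
  show "ln (real (N + L)) - ln (real N) \<le> (\<Sum>s<L. 1 / real (N + s))"
    unfolding telescope using assms by (intro sum_mono ln_add_one_diff_bounds(2)) auto
qed

lemma harmonic_block_shift_diff:
  "(\<Sum>s<L. 1 / real (N + s)) - (\<Sum>s<L. 1 / (real (N + s) + 1)) \<le> 1 / real N"
proof -
  have "(\<Sum>s<L. 1 / real (N + s)) - (\<Sum>s<L. 1 / (real (N + s) + 1))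
      = (\<Sum>s<L. (- 1 / real (N + Suc s)) - (- 1 / real (N + s)))"
    by (simp add: sum_subtractf[symmetric] algebra_simps)
  also have "\<dots> = 1 / real N - 1 / real (N + L)"
    by (subst sum_lessThan_telescope) simp
  also have "\<dots> \<le> 1 / real N" by simp
  finally show ?thesis .
qed

context
  fixes b d :: nat
  assumes b_ge_2: "2 \<le> b" and d_less: "d < b"
begin

lemma tail_mass_Suc:
  "tail_mass b d K (Suc M)
     = (real b - 1) / real b * tail_mass b d K M
       + (if K = 0 then 1 else tail_mass b d (K - 1) M / real b)"
proof -
  have "tail_mass b d K (Suc M)
      = real (card (tails b d 0 K)) + (\<Sum>J<M. real (card (tails b d (Suc J) K)) / real b ^ Suc J)"
    unfolding tail_mass_def by (subst sum.lessThan_Suc_shift) simp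
  also have "(\<Sum>J<M. real (card (tails b d (Suc J) K)) / real b ^ Suc J)
     = (\<Sum>J<M. (real b - 1) / real b * (real (card (tails b d J K)) / real b ^ J)
          + (if K = 0 then 0 else real (card (tails b d J (K - 1))) / real b ^ J / real b))"
    using b_ge_2 d_less
    by (intro sum.cong refl) (auto simp: card_tails_Suc of_nat_diff field_simps)
  also have "\<dots> = (real b - 1) / real b * tail_mass b d K M
                  + (if K = 0 then 0 else tail_mass b d (K - 1) M / real b)"
    unfolding tail_mass_def by (simp add: sum.distrib sum_distrib_left sum_divide_distrib)
  also have "real (card (tails b d 0 K)) = (if K = 0 then 1 else 0)"
    by (simp add: of_nat_card_tails)
  finally show ?thesis by simp
qed

lemma tail_mass_le: "tail_mass b d K M \<le> real b"
proof (induction M arbitrary: K)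
  case 0
  then show ?case by (simp add: tail_mass_def)
next
  case (Suc M)
  have "(real b - 1) / real b * tail_mass b d K M \<le> (real b - 1) / real b * real b"
    using Suc b_ge_2 by (intro mult_left_mono) auto
  moreover have "(if K = 0 then 1 else tail_mass b d (K - 1) M / real b) \<le> 1"
    using Suc[of "K - 1"] b_ge_2 by simp
  ultimately show ?case
    using b_ge_2 by (simp add: tail_mass_Suc)
qed

text \<open>The limit \<open>G\<close> is a fixed point of \<open>G = (b - 1)/b G + 1\<close>.\<close>
lemma tail_mass_tendsto: "tail_mass b d K \<longlonglongrightarrow> real b"
proof -
  have bpos: "real b > 0" using b_ge_2 by simp
  have step: "tail_mass b d K \<longlonglongrightarrow> real b"
    if source: "(\<lambda>M. if K = 0 then 1 else tail_mass b d (K - 1) M / real b) \<longlonglongrightarrow> 1" for K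
  proof -
    obtain G where G: "tail_mass b d K \<longlonglongrightarrow> G"
      using incseq_convergent[OF incseq_tail_mass, of b d K] tail_mass_le by blast
    have "(\<lambda>M. tail_mass b d K (Suc M)) \<longlonglongrightarrow> (real b - 1) / real b * G + 1"
      unfolding tail_mass_Suc by (intro tendsto_intros G source)
    moreover have "(\<lambda>M. tail_mass b d K (Suc M)) \<longlonglongrightarrow> G"
      using G by (rule LIMSEQ_Suc)
    ultimately have "G = (real b - 1) / real b * G + 1"
      by (rule LIMSEQ_unique[rotated])
    then have "G = real b" using bpos by (simp add: field_simps; argo)
    with G show ?thesis by simp
  qed
  show ?thesis
  proof (induction K)
    case (Suc K)
    have "(\<lambda>M. tail_mass b d K M / real b) \<longlonglongrightarrow> real b / real b"
      using bpos by (intro tendsto_intros Suc.IH) simp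
    then show ?case using bpos by (intro step) simp
  qed (intro step; simp)
qed

lemma finite_sum_recip_tails_le:
  assumes p: "p > 0" and F: "finite F" "F \<subseteq> (SIGMA J:UNIV. tails b d J K)"
  defines "f \<equiv> \<lambda>(J, u). 1 / real (p * b ^ J + u)"
  shows "sum f F \<le> real b / real p"
proof -
  obtain M where "\<forall>J\<in>fst ` F. J < M"
    using finite_nat_set_iff_bounded[of "fst ` F"] F(1) by auto
  then have "F \<subseteq> (SIGMA J:{..<M}. tails b d J K)" using F(2) by force
  then have "sum f F \<le> sum f (SIGMA J:{..<M}. tails b d J K)"
    by (intro sum_mono2) (auto simp: f_def)
  also have "\<dots> \<le> tail_mass b d K M / real p"
    unfolding f_def by (rule sum_recip_tails_tail_mass(2)[OF b_ge_2 p])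
  also have "\<dots> \<le> real b / real p"
    using tail_mass_le by (intro divide_right_mono) auto
  finally show ?thesis .
qed

lemma recip_extensions:
  assumes p: "p > 0"
  shows "(\<lambda>m. 1 / real m) summable_on extensions b d p K"
    and "real b / (real p + 1) \<le> (\<Sum>\<^sub>\<infinity>m\<in>extensions b d p K. 1 / real m)"
    and "(\<Sum>\<^sub>\<infinity>m\<in>extensions b d p K. 1 / real m) \<le> real b / real p"
proof -
  define A where "A = (SIGMA J:UNIV. tails b d J K)"
  define f where "f = (\<lambda>(J, u). 1 / real (p * b ^ J + u))"
  have inj: "inj_on (\<lambda>(J, u). p * b ^ J + u) A"
    by (rule inj_on_subset[OF inj_on_append[OF b_ge_2 p]]) (auto simp: A_def tails_def)
  have comp: "(\<lambda>m. 1 / real m) \<circ> (\<lambda>(J, u). p * b ^ J + u) = f"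
    by (auto simp: f_def)
  have f_nonneg: "f x \<ge> 0" for x by (cases x) (simp add: f_def)
  have finite_sum_le: "sum f F \<le> real b / real p" if "finite F" "F \<subseteq> A" for F
    using finite_sum_recip_tails_le[OF p that[unfolded A_def]] by (simp add: f_def)
  have summable: "f summable_on A"
    using f_nonneg finite_sum_le by (intro nonneg_bdd_above_summable_on) (auto intro!: bdd_aboveI)
  then show "(\<lambda>m. 1 / real m) summable_on extensions b d p K"
    unfolding extensions_eq_image A_def[symmetric] summable_on_reindex[OF inj] comp .
  have infsum_eq: "(\<Sum>\<^sub>\<infinity>m\<in>extensions b d p K. 1 / real m) = infsum f A"
    unfolding extensions_eq_image A_def[symmetric] infsum_reindex[OF inj] comp ..
  show "(\<Sum>\<^sub>\<infinity>m\<in>extensions b d p K. 1 / real m) \<le> real b / real p"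
    unfolding infsum_eq by (rule infsum_le_finite_sums[OF summable finite_sum_le])
  have "tail_mass b d K M / (real p + 1) \<le> infsum f A" for M
  proof -
    have "tail_mass b d K M / (real p + 1) \<le> sum f (SIGMA J:{..<M}. tails b d J K)"
      unfolding f_def by (rule sum_recip_tails_tail_mass(1)[OF b_ge_2 p])
    also have "\<dots> \<le> infsum f A"
      using f_nonneg by (intro finite_sum_le_infsum[OF summable]) (auto simp: A_def)
    finally show ?thesis .
  qed
  moreover have "(\<lambda>M. tail_mass b d K M / (real p + 1)) \<longlonglongrightarrow> real b / (real p + 1)"
    by (intro tendsto_intros tail_mass_tendsto) auto
  ultimately show "real b / (real p + 1) \<le> (\<Sum>\<^sub>\<infinity>m\<in>extensions b d p K. 1 / real m)"
    unfolding infsum_eq by (intro LIMSEQ_le_const2) auto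
qed

lemma infsum_recip_extensions_split:
  assumes n: "n > 0"
  shows "(\<Sum>\<^sub>\<infinity>m\<in>extensions b d n K. 1 / real m)
       = (\<Sum>s<b ^ K. \<Sum>\<^sub>\<infinity>m\<in>extensions b d (n * b ^ K + s) (K - low_digcount b d K s). 1 / real m)"
  unfolding extensions_split[OF b_ge_2 n order.refl]
proof (rule sum_infsum[symmetric])
  have pos: "n * b ^ K + s > 0" for s using n b_ge_2 by simp
  show "(\<lambda>m. 1 / real m) summable_on extensions b d (n * b ^ K + s) (K - low_digcount b d K s)" for s
    by (rule recip_extensions(1)[OF pos])
  show "extensions b d (n * b ^ K + s) (K - low_digcount b d K s)
          \<inter> extensions b d (n * b ^ K + s') (K - low_digcount b d K s') = {}"
    if "s \<in> {..<b ^ K}" "s' \<in> {..<b ^ K}" "s \<noteq> s'" for s s'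
    using that blen_append[OF b_ge_2 n, of s K] blen_append[OF b_ge_2 n, of s' K]
    by (intro extensions_disjoint[OF b_ge_2 pos pos]) auto
qed simp

lemma infsum_recip_extensions_approx:
  assumes n: "n > 0"
  shows "\<bar>(\<Sum>\<^sub>\<infinity>m\<in>extensions b d n K. 1 / real m) - real b * ln (1 + 1 / real n)\<bar>
           \<le> real b / real b ^ K"
proof -
  define N where "N = n * b ^ K"
  define upper where "upper = (\<Sum>s<b ^ K. 1 / real (N + s))"
  define lower where "lower = (\<Sum>s<b ^ K. 1 / (real (N + s) + 1))"
  have pos: "n * b ^ K + s > 0" for s using n b_ge_2 by simp
  have T_le: "(\<Sum>\<^sub>\<infinity>m\<in>extensions b d n K. 1 / real m) \<le> real b * upper"
    unfolding infsum_recip_extensions_split[OF n] upper_def sum_distrib_left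
    by (intro sum_mono) (use recip_extensions(3)[OF pos] in \<open>simp add: N_def\<close>)
  have T_ge: "real b * lower \<le> (\<Sum>\<^sub>\<infinity>m\<in>extensions b d n K. 1 / real m)"
    unfolding infsum_recip_extensions_split[OF n] lower_def sum_distrib_left
    by (intro sum_mono) (use recip_extensions(2)[OF pos] in \<open>simp add: N_def\<close>)
  have N_pos: "N > 0" using pos[of 0] by (simp add: N_def)
  have "ln (real (N + b ^ K)) - ln (real N) = ln ((real n + 1) * real b ^ K) - ln (real n * real b ^ K)"
    by (simp add: N_def algebra_simps)
  also have "\<dots> = ln (real n + 1) - ln (real n)"
    using n b_ge_2 by (simp add: ln_mult)
  also have "\<dots> = ln ((real n + 1) / real n)"
    using n by (simp add: ln_div)
  also have "\<dots> = ln (1 + 1 / real n)"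
    using n by (simp add: field_simps)
  finally have ln_eq: "ln (real (N + b ^ K)) - ln (real N) = ln (1 + 1 / real n)" .
  have "lower \<le> ln (1 + 1 / real n)" "ln (1 + 1 / real n) \<le> upper"
    using harmonic_block_ln_bounds[OF N_pos, of "b ^ K"] ln_eq by (simp_all add: lower_def upper_def)
  then have ln_bounds: "real b * lower \<le> real b * ln (1 + 1 / real n)"
                       "real b * ln (1 + 1 / real n) \<le> real b * upper"
    by (simp_all add: mult_left_mono)
  have "upper - lower \<le> 1 / real b ^ K"
  proof -
    have "real b ^ K \<le> real N"
      using n mult_right_mono[of 1 "real n" "real b ^ K"] by (simp add: N_def)
    then have "1 / real N \<le> 1 / real b ^ K" using b_ge_2 N_pos by (intro divide_left_mono) auto
    then show ?thesis using harmonic_block_shift_diff[of N "b ^ K"] by (simp add: upper_def lower_def)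
  qed
  then have "real b * (upper - lower) \<le> real b * (1 / real b ^ K)"
    by (rule mult_left_mono) simp
  then have "real b * upper - real b * lower \<le> real b / real b ^ K"
    by (simp add: right_diff_distrib)
  then show ?thesis using T_le T_ge ln_bounds by (simp add: abs_le_iff)
qed

lemma tendsto_infsum_recip_extensions:
  assumes n: "n > 0"
  shows "(\<lambda>K. \<Sum>\<^sub>\<infinity>m\<in>extensions b d n K. 1 / real m) \<longlonglongrightarrow> real b * ln (1 + 1 / real n)"
proof -
  have bound: "\<forall>K. norm ((\<Sum>\<^sub>\<infinity>m\<in>extensions b d n K. 1 / real m) - real b * ln (1 + 1 / real n))
                 \<le> real b * (1 / real b) ^ K"
    using infsum_recip_extensions_approx[OF n]
    by (simp only: real_norm_def power_one_over times_divide_eq_right mult_1_right) simp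
  have "norm (1 / real b) < 1" using b_ge_2 by simp
  then have "(\<lambda>K. real b * (1 / real b) ^ K) \<longlonglongrightarrow> 0"
    by (rule tendsto_mult_right_zero[OF LIMSEQ_power_zero])
  with bound have "(\<lambda>K. (\<Sum>\<^sub>\<infinity>m\<in>extensions b d n K. 1 / real m) - real b * ln (1 + 1 / real n))
                     \<longlonglongrightarrow> 0"
    by (rule Lim_null_comparison[OF always_eventually])
  then show ?thesis by (rule LIM_zero_cancel)
qed

end

theorem mainTheorem16:
  fixes b d n :: nat
  assumes "b \<ge> 2" and "d < b" and "n > 0"
  defines "S k \<equiv> {m::nat. m > 0 \<and> blen b m \<ge> blen b n \<and>
                         ld b (blen b n) m = n \<and> digcount b d m = k}"
  shows "(\<forall>k. (\<lambda>m. 1 / real m) summable_on S k) \<and>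
         ((\<lambda>k. \<Sum>\<^sub>\<infinity>m\<in>S k. 1 / real m) \<longlonglongrightarrow> real b * ln (1 + 1 / real n))"
proof -
  define k\<^sub>0 where "k\<^sub>0 = digcount b d n"
  have S: "S k = (if k\<^sub>0 \<le> k then extensions b d n (k - k\<^sub>0) else {})" for k
    unfolding S_def k\<^sub>0_def by (rule starts_with_digcount_eq_extensions[OF assms(1,3)])
  have "(\<lambda>m. 1 / real m) summable_on S k" for k
    using recip_extensions(1)[OF assms(1-3)] by (simp add: S)
  moreover have "(\<lambda>k. \<Sum>\<^sub>\<infinity>m\<in>extensions b d n (k - k\<^sub>0). 1 / real m)
                   \<longlonglongrightarrow> real b * ln (1 + 1 / real n)"
    by (rule filterlim_compose[OF tendsto_infsum_recip_extensions[OF assms(1-3)]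
                                  filterlim_minus_const_nat_at_top])
  moreover have "\<forall>\<^sub>F k in sequentially. (\<Sum>\<^sub>\<infinity>m\<in>extensions b d n (k - k\<^sub>0). 1 / real m)
                                         = (\<Sum>\<^sub>\<infinity>m\<in>S k. 1 / real m)"
    using eventually_ge_at_top[of k\<^sub>0] by eventually_elim (simp add: S)
  ultimately show ?thesis by (blast intro: Lim_transform_eventually)
qed

end
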